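(* Let $k\ge1$ and $0<\alpha<\alpha_1<\alpha_2<\dots<\alpha_k<1$. For the asymmetric walk with fixed $q<p$, $$\lim_{N\to\infty}P_{[\alpha N]}\Big(\bigcap_{i=1}^k\{G([\alpha_iN])\equiv1\ (\mathrm{mod}\ 2)\}\Big)=\frac{1}{(2-(p-q))^k}.$$ Consequently, by inclusion–exclusion, the parities of $G([\alpha_1N]),\dots,G([\alpha_kN])$ converge jointly in distribution to i.i.d. Bernoulli random variables that equal "odd" with probability $(2-(p-q))^{-1}$.
   Context: Let $\mathcal T_N=\{0,\dots,N\}$ and let $(X_n)$ be a nearest-neighbour random walk on $\mathcal T_N$ stepping right with probability $p$ and left with probability $q=1-p$, where $0<q<p$ are fixed, independently at each step, and stopped the first time it is at $0$ or $N$. $P_x$ denotes the law with $X_0=x$. $T_a=\inf\{n\ge1:X_n=a\}$, $\tau_N=T_0\wedge T_N$, and $G(y)=\sum_{k=0}^{\tau_N}\mathbf 1\{X_k=y\}$ is the number of visits to $y$ before exit. $[\cdot]$ is the integer part. *)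

theory Defs
  imports "HOL-Probability.Probability"
begin

text \<open>Step sequence: omega !! n = True means the (n+1)-st step is to the right.
  Steps are i.i.d. with P(right) = p, P(left) = q = 1 - p.\<close>
definition step_space :: "real \<Rightarrow> bool stream measure" where
  "step_space p = stream_space (measure_pmf (bernoulli_pmf p))"

fun walk :: "nat \<Rightarrow> nat \<Rightarrow> bool stream \<Rightarrow> nat \<Rightarrow> nat" where
  "walk N x \<omega> 0 = x"
| "walk N x \<omega> (Suc n) =
     (let y = walk N x \<omega> n in
      if y = 0 \<or> y = N then y
      else if \<omega> !! n then y + 1 else y - 1)"

text \<open>G(y) = number of k \<le> tau_N with X_k = y, where tau_N = T_0 \<and> T_N and
  T_a = inf {n \<ge> 1. X_n = a}; k \<le> tau_N iff X_j \<notin> {0,N} for all 1 \<le> j < k.\<close>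
definition visits :: "nat \<Rightarrow> nat \<Rightarrow> nat \<Rightarrow> bool stream \<Rightarrow> nat" where
  "visits N x y \<omega> =
     card {k. walk N x \<omega> k = y \<and>
              (\<forall>j. 1 \<le> j \<and> j < k \<longrightarrow> walk N x \<omega> j \<noteq> 0 \<and> walk N x \<omega> j \<noteq> N)}"

definition Pwalk :: "real \<Rightarrow> (bool stream \<Rightarrow> bool) \<Rightarrow> real" where
  "Pwalk p E = measure (step_space p) {\<omega> \<in> space (step_space p). E \<omega>}"

end

theory Submission
  imports Defs
begin

text \<open>
  For interior sites \<open>y\<^sub>i\<close> (\<open>i \<in> T\<close>) consider the parity correlation
  \<open>u(x) = E\<^sub>x \<Prod>\<^sub>i (-1)^G(y\<^sub>i)\<close>.  First-step analysis shows that \<open>u\<close> solves the twisted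
  equation \<open>u(x) = \<sigma>(x) (p u(x+1) + q u(x-1))\<close> with \<open>\<sigma>(x) = \<Prod>\<^sub>i (-1)^[x = y\<^sub>i]\<close> and
  boundary values \<open>1\<close> (the walk leaves \<open>]0,N[\<close> almost surely by the maximum principle).
  For a single site the equation has an explicit solution built from the harmonic
  functions \<open>A + B (q/p)^z\<close>.  The product of the one-site solutions solves the
  equation up to a defect made of cross terms between different sites, which are
  exponentially small in the distance of the sites, plus a term near the left boundary.
  A comparison argument (maximum principle with a linear and a geometric barrier, using
  the drift \<open>p > q\<close>) turns this into \<open>u = \<Prod> (one-site solutions) + o(1)\<close> when the
  start and the sites sit at distinct macroscopic positions \<open>[\<alpha>N] < [a\<^sub>iN] < N\<close>, so
  each correlation tends to \<open>(1 - 2/(2-(p-q)))^|T|\<close>.  Finally the joint parity law is a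
  linear combination of correlations (expand \<open>\<Prod>\<^sub>i (1 \<plusminus> (-1)^G(y\<^sub>i))/2\<close>), which yields
  the i.i.d. Bernoulli limit and in particular the theorem \<open>proposition4p2\<close> at the end.
\<close>

definition walk_step :: "nat \<Rightarrow> nat \<Rightarrow> bool \<Rightarrow> nat" where
  "walk_step N y b = (if y = 0 \<or> y = N then y else if b then y + 1 else y - 1)"

lemma walk_Suc_step: "walk N x \<omega> (Suc n) = walk_step N (walk N x \<omega> n) (\<omega> !! n)"
  by (simp add: walk_step_def Let_def)

declare walk.simps(2)[simp del]

lemma walk_Cons: "walk N x (b ## \<omega>) (Suc n) = walk N (walk_step N x b) \<omega> n"
  by (induction n) (simp_all add: walk_Suc_step)

lemma walk_absorbed: "x = 0 \<or> x = N \<Longrightarrow> walk N x \<omega> n = x"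
  by (induction n) (auto simp: walk_Suc_step walk_step_def)

lemma walk_step_interior:
  "0 < x \<Longrightarrow> x < N \<Longrightarrow> walk_step N x True = x + 1 \<and> walk_step N x False = x - 1"
  by (simp add: walk_step_def)

lemma walk_step_le: "x \<le> N \<Longrightarrow> walk_step N x b \<le> N"
  by (auto simp: walk_step_def)

lemma prob_space_step_space: "prob_space (step_space p)"
  unfolding step_space_def by (rule prob_space.prob_space_stream_space[OF prob_space_measure_pmf])

lemma measurable_walk[measurable]:
  "(\<lambda>\<omega>. walk N x \<omega> n) \<in> measurable (step_space p) (count_space UNIV)"
  unfolding step_space_def
proof (induction n)
  case (Suc n)
  note [measurable] = Suc
  show ?case unfolding walk_Suc_step walk_step_def by measurable
qed simp

lemma measurable_Cons[measurable]: "(\<lambda>\<omega>. b ## \<omega>) \<in> measurable (step_space p) (step_space p)"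
  unfolding step_space_def by measurable

lemma measurable_visits[measurable]:
  "(\<lambda>\<omega>. visits N x y \<omega>) \<in> measurable (step_space p) (count_space UNIV)"
  unfolding visits_def by measurable


definition alive :: "nat \<Rightarrow> nat \<Rightarrow> bool stream \<Rightarrow> nat \<Rightarrow> bool" where
  "alive N x \<omega> k = (\<forall>j. 1 \<le> j \<and> j < k \<longrightarrow> walk N x \<omega> j \<noteq> 0 \<and> walk N x \<omega> j \<noteq> N)"

definition visit_times :: "nat \<Rightarrow> nat \<Rightarrow> nat \<Rightarrow> bool stream \<Rightarrow> nat set" where
  "visit_times N x y \<omega> = {k. walk N x \<omega> k = y \<and> alive N x \<omega> k}"

definition exits :: "nat \<Rightarrow> nat \<Rightarrow> bool stream \<Rightarrow> bool" where
  "exits N x \<omega> = (\<exists>j\<ge>1. walk N x \<omega> j = 0 \<or> walk N x \<omega> j = N)"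

lemma visits_eq_card: "visits N x y \<omega> = card (visit_times N x y \<omega>)"
  unfolding visits_def visit_times_def alive_def ..

lemma measurable_exits[measurable]: "Measurable.pred (step_space p) (exits N x)"
  unfolding exits_def by measurable

lemma all_Suc_shift: "(\<forall>j. 1 \<le> j \<and> j < Suc m \<longrightarrow> Q j) \<longleftrightarrow> (\<forall>j<m. Q (Suc j))"
  by (auto simp: Suc_le_eq dest: gr0_implies_Suc)

lemma alive_Cons:
  "alive N x (b ## \<omega>) (Suc m) \<longleftrightarrow>
     m = 0 \<or> (walk_step N x b \<noteq> 0 \<and> walk_step N x b \<noteq> N \<and> alive N (walk_step N x b) \<omega> m)"
proof -
  have split: "(\<forall>j<m. P j) \<longleftrightarrow> m = 0 \<or> (P 0 \<and> (\<forall>j. 1 \<le> j \<and> j < m \<longrightarrow> P j))" for P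
    by (cases m) (simp_all only: All_less_Suc2 all_Suc_shift, simp_all)
  show ?thesis
    unfolding alive_def all_Suc_shift walk_Cons split by simp
qed

lemma visit_times_Cons:
  assumes "0 < y" "y < N"
  shows "visit_times N x y (b ## \<omega>) =
    (if x = y then {0} else {}) \<union> Suc ` visit_times N (walk_step N x b) y \<omega>"
proof (rule set_eqI)
  fix k
  show "k \<in> visit_times N x y (b ## \<omega>) \<longleftrightarrow>
    k \<in> (if x = y then {0} else {}) \<union> Suc ` visit_times N (walk_step N x b) y \<omega>"
  proof (cases k)
    case (Suc m)
    have "walk_step N x b \<noteq> 0 \<and> walk_step N x b \<noteq> N"
      if "walk N (walk_step N x b) \<omega> m = y"
    proof (rule ccontr)
      assume "\<not> (walk_step N x b \<noteq> 0 \<and> walk_step N x b \<noteq> N)"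
      then have "walk N (walk_step N x b) \<omega> m = walk_step N x b"
        by (intro walk_absorbed) auto
      then show False using that assms \<open>\<not> (walk_step N x b \<noteq> 0 \<and> walk_step N x b \<noteq> N)\<close> by auto
    qed
    then have "Suc m \<in> visit_times N x y (b ## \<omega>) \<longleftrightarrow> m \<in> visit_times N (walk_step N x b) y \<omega>"
      by (auto simp: visit_times_def walk_Cons alive_Cons) (simp add: alive_def)
    moreover have "Suc m \<in> Suc ` A \<longleftrightarrow> m \<in> A" for A by auto
    ultimately show ?thesis using Suc by simp
  qed (auto simp: visit_times_def alive_def)
qed

lemma finite_visit_times: "exits N x \<omega> \<Longrightarrow> finite (visit_times N x y \<omega>)"
proof -
  assume "exits N x \<omega>"
  then obtain j where j: "1 \<le> j" "walk N x \<omega> j = 0 \<or> walk N x \<omega> j = N"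
    unfolding exits_def by blast
  have "k \<le> j" if "k \<in> visit_times N x y \<omega>" for k
  proof (rule ccontr)
    assume "\<not> k \<le> j"
    then show False using that j by (auto simp: visit_times_def alive_def)
  qed
  then have "visit_times N x y \<omega> \<subseteq> {..j}" by auto
  then show ?thesis by (rule finite_subset) simp
qed

lemma exits_absorbed: "x = 0 \<or> x = N \<Longrightarrow> exits N x \<omega>"
  unfolding exits_def using walk_absorbed[of x N \<omega> 1] by auto

lemma exits_Cons: "exits N x (b ## \<omega>) \<longleftrightarrow> exits N (walk_step N x b) \<omega>"
proof -
  let ?s = "walk_step N x b"
  let ?hit = "\<lambda>j. walk N ?s \<omega> j = 0 \<or> walk N ?s \<omega> j = N"
  have shift: "(\<exists>j\<ge>1. Q j) \<longleftrightarrow> (\<exists>j. Q (Suc j))" for Q :: "nat \<Rightarrow> bool"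
  proof
    assume "\<exists>j\<ge>1. Q j"
    then obtain j where "1 \<le> j" "Q j" by blast
    then show "\<exists>j. Q (Suc j)" by (intro exI[of _ "j - 1"]) simp
  qed auto
  have split: "(\<exists>j. Q j) \<longleftrightarrow> Q 0 \<or> (\<exists>j\<ge>1. Q j)" for Q :: "nat \<Rightarrow> bool"
  proof
    assume "\<exists>j. Q j"
    then obtain j where "Q j" ..
    then show "Q 0 \<or> (\<exists>j\<ge>1. Q j)" by (cases j) auto
  qed auto
  have "exits N x (b ## \<omega>) \<longleftrightarrow> (\<exists>j. ?hit j)"
    unfolding exits_def shift walk_Cons ..
  also have "\<dots> \<longleftrightarrow> ?hit 0 \<or> (\<exists>j\<ge>1. ?hit j)"
    by (rule split)
  also have "\<dots> \<longleftrightarrow> exits N ?s \<omega>"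
    using exits_absorbed[of ?s N \<omega>] unfolding exits_def by auto
  finally show ?thesis .
qed

lemma visits_Cons:
  assumes "0 < y" "y < N" and "exits N x (b ## \<omega>)"
  shows "visits N x y (b ## \<omega>) = (if x = y then 1 else 0) + visits N (walk_step N x b) y \<omega>"
  using finite_visit_times[OF assms(3)[unfolded exits_Cons], of y]
  by (cases "x = y") (simp_all add: visits_eq_card visit_times_Cons[OF assms(1,2)] card_image card_insert_if)

lemma visits_absorbed: "0 < y \<Longrightarrow> y < N \<Longrightarrow> x = 0 \<or> x = N \<Longrightarrow> visits N x y \<omega> = 0"
  by (auto simp: visits_eq_card visit_times_def walk_absorbed)


section \<open>First-step analysis\<close>

text \<open>Conditioning on the first step: the law of the step sequence is that of an independent
  first step followed by a fresh step sequence.  Stated for bounded measurable functionals.\<close>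
lemma integral_first_step_nonneg:
  fixes g :: "bool stream \<Rightarrow> real"
  assumes p: "0 \<le> p" "p \<le> 1" and g_meas[measurable]: "g \<in> borel_measurable (step_space p)"
    and g: "\<And>\<omega>. 0 \<le> g \<omega>" "\<And>\<omega>. g \<omega> \<le> B"
  shows "(\<integral>\<omega>. g \<omega> \<partial>step_space p) =
    p * (\<integral>\<omega>. g (True ## \<omega>) \<partial>step_space p) + (1 - p) * (\<integral>\<omega>. g (False ## \<omega>) \<partial>step_space p)"
proof -
  let ?S = "step_space p"
  interpret S: prob_space ?S by (rule prob_space_step_space)
  have int: "integrable ?S h" if "h \<in> borel_measurable ?S" "\<And>\<omega>. \<bar>h \<omega>\<bar> \<le> B" for h
    using that by (intro S.integrable_const_bound[where B=B]) auto
  have int_Cons: "integrable ?S (\<lambda>\<omega>. g (b ## \<omega>))" for b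
    by (rule int) (use g measurable_compose[OF measurable_Cons g_meas] in auto)
  have nonneg: "0 \<le> (\<integral>\<omega>. g (b ## \<omega>) \<partial>?S)" for b
    using g by (simp add: integral_nonneg_AE)
  have "ennreal (\<integral>\<omega>. g \<omega> \<partial>?S) = (\<integral>\<^sup>+\<omega>. g \<omega> \<partial>?S)"
    using g by (intro nn_integral_eq_integral[symmetric] int) auto
  also have "\<dots> = (\<integral>\<^sup>+b. (\<integral>\<^sup>+\<omega>. g (b ## \<omega>) \<partial>?S) \<partial>measure_pmf (bernoulli_pmf p))"
    unfolding step_space_def
    by (rule prob_space.nn_integral_stream_space[OF prob_space_measure_pmf])
       (simp add: step_space_def[symmetric])
  also have "\<dots> = (\<integral>\<^sup>+\<omega>. g (True ## \<omega>) \<partial>?S) * ennreal p + (\<integral>\<^sup>+\<omega>. g (False ## \<omega>) \<partial>?S) * ennreal (1 - p)"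
    using p by simp
  also have "\<dots> = ennreal (p * (\<integral>\<omega>. g (True ## \<omega>) \<partial>?S) + (1 - p) * (\<integral>\<omega>. g (False ## \<omega>) \<partial>?S))"
    using p g int_Cons nonneg
    by (simp add: nn_integral_eq_integral ennreal_mult'[symmetric] ennreal_plus[symmetric] mult.commute
             del: ennreal_plus)
  finally show ?thesis
    using p nonneg g by (subst (asm) ennreal_inj) (auto simp: integral_nonneg_AE)
qed

lemma integral_first_step:
  fixes f :: "bool stream \<Rightarrow> real"
  assumes p: "0 \<le> p" "p \<le> 1" and f_meas[measurable]: "f \<in> borel_measurable (step_space p)"
    and f: "\<And>\<omega>. \<bar>f \<omega>\<bar> \<le> B"
  shows "(\<integral>\<omega>. f \<omega> \<partial>step_space p) =
    p * (\<integral>\<omega>. f (True ## \<omega>) \<partial>step_space p) + (1 - p) * (\<integral>\<omega>. f (False ## \<omega>) \<partial>step_space p)"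
proof -
  let ?S = "step_space p"
  interpret S: prob_space ?S by (rule prob_space_step_space)
  have int: "integrable ?S h" if "h \<in> borel_measurable ?S" "\<And>\<omega>. \<bar>h \<omega>\<bar> \<le> B" for h
    using that by (intro S.integrable_const_bound[where B=B]) auto
  have int_Cons: "integrable ?S (\<lambda>\<omega>. f (b ## \<omega>))" for b
    by (rule int) (use f measurable_compose[OF measurable_Cons f_meas] in auto)
  text \<open>Shift \<open>f\<close> by the constant \<open>B\<close> to make it nonnegative.\<close>
  have shifted: "0 \<le> f \<omega> + B" "f \<omega> + B \<le> 2 * B" for \<omega>
    using f[of \<omega>] by auto
  have "(\<integral>\<omega>. f \<omega> + B \<partial>?S) =
      p * (\<integral>\<omega>. f (True ## \<omega>) + B \<partial>?S) + (1 - p) * (\<integral>\<omega>. f (False ## \<omega>) + B \<partial>?S)"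
    by (rule integral_first_step_nonneg[where B="2 * B"]) (use p shifted in auto)
  moreover have shift_integral: "(\<integral>\<omega>. h \<omega> + B \<partial>?S) = (\<integral>\<omega>. h \<omega> \<partial>?S) + B"
    if "integrable ?S h" for h
    using that by (simp add: S.prob_space)
  moreover have "integrable ?S f" by (rule int) (use f in auto)
  ultimately show ?thesis
    using int_Cons by (simp add: ring_distribs)
qed

lemma discrete_maximum_principle:
  fixes f :: "nat \<Rightarrow> real" and p q :: real
  assumes pq: "0 < p" "0 < q" "p + q = 1"
    and sub: "\<And>z. 0 < z \<Longrightarrow> z < N \<Longrightarrow> f z \<le> p * f (z + 1) + q * f (z - 1)"
    and x: "x \<le> N"
  shows "f x \<le> max (f 0) (f N)"
proof -
  define M where "M = Max (f ` {0..N})"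
  have le_M: "f z \<le> M" if "z \<le> N" for z
    unfolding M_def using that by (intro Max_ge) auto
  have "M \<in> f ` {0..N}"
    unfolding M_def by (rule Max_in) auto
  then obtain z0 where "z0 \<le> N" "f z0 = M" by auto
  text \<open>The leftmost maximiser cannot be interior.\<close>
  define x0 where "x0 = (LEAST z. z \<le> N \<and> f z = M)"
  have x0: "x0 \<le> N" "f x0 = M"
    unfolding x0_def using LeastI[of "\<lambda>z. z \<le> N \<and> f z = M" z0] \<open>z0 \<le> N\<close> \<open>f z0 = M\<close> by auto
  have "x0 = 0 \<or> x0 = N"
  proof (rule ccontr)
    assume "\<not> (x0 = 0 \<or> x0 = N)"
    then have i: "0 < x0" "x0 < N" using x0 by auto
    have "f (x0 - 1) \<noteq> M"
    proof
      assume "f (x0 - 1) = M"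
      then have "x0 \<le> x0 - 1"
        using Least_le[of "\<lambda>z. z \<le> N \<and> f z = M" "x0 - 1", folded x0_def] i by simp
      then show False using i by simp
    qed
    then have "f (x0 - 1) < M" using le_M[of "x0 - 1"] i by linarith
    then have "p * f (x0 + 1) + q * f (x0 - 1) < p * M + q * M"
      using le_M[of "x0 + 1"] i pq by (intro add_le_less_mono mult_left_mono mult_strict_left_mono) auto
    also have "\<dots> = M" using pq by (simp add: distrib_right[symmetric])
    finally show False using sub[OF i] x0 by simp
  qed
  then show ?thesis using le_M[OF x] x0 by auto
qed


locale drifted_walk =
  fixes p q :: real
  assumes q_def: "q = 1 - p" and q_pos: "0 < q" and q_less_p: "q < p"
begin

lemma p_pos: "0 < p" and p_less_1: "p < 1" and p_plus_q: "p + q = 1"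
  using q_def q_pos q_less_p by auto

lemma integral_first_step_walk:
  assumes "f \<in> borel_measurable (step_space p)" "\<And>\<omega>. \<bar>f \<omega>\<bar> \<le> B"
  shows "(\<integral>\<omega>. f \<omega> \<partial>step_space p) =
    p * (\<integral>\<omega>. f (True ## \<omega>) \<partial>step_space p) + q * (\<integral>\<omega>. f (False ## \<omega>) \<partial>step_space p)"
  using integral_first_step[OF _ _ assms] p_pos p_less_1 q_def by simp

text \<open>The probability of never leaving \<open>]0, N[\<close> is harmonic in the interior and vanishes on
  the boundary, so it vanishes identically: the walk exits almost surely.\<close>
definition stay_prob :: "nat \<Rightarrow> nat \<Rightarrow> real" where
  "stay_prob N x = (\<integral>\<omega>. of_bool (\<not> exits N x \<omega>) \<partial>step_space p)"

lemma stay_prob_harmonic: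
  assumes "0 < x" "x < N"
  shows "stay_prob N x = p * stay_prob N (x + 1) + q * stay_prob N (x - 1)"
  unfolding stay_prob_def
  by (subst integral_first_step_walk[where B=1])
     (use assms in \<open>auto simp: exits_Cons walk_step_interior\<close>)

lemma stay_prob_zero:
  assumes "x \<le> N" shows "stay_prob N x = 0"
proof -
  have boundary: "stay_prob N x = 0" if "x = 0 \<or> x = N" for x
    unfolding stay_prob_def using exits_absorbed[OF that] by simp
  have "stay_prob N x \<le> max (stay_prob N 0) (stay_prob N N)"
    using p_pos q_pos p_plus_q stay_prob_harmonic assms by (intro discrete_maximum_principle) auto
  moreover have "0 \<le> stay_prob N x"
    unfolding stay_prob_def by (simp add: integral_nonneg_AE)
  ultimately show ?thesis using boundary by simp
qed

lemma AE_exits: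
  assumes "x \<le> N" shows "AE \<omega> in step_space p. exits N x \<omega>"
proof -
  interpret S: prob_space "step_space p" by (rule prob_space_step_space)
  have "(\<integral>\<omega>. of_bool (\<not> exits N x \<omega>) \<partial>step_space p) = (0::real)"
    using stay_prob_zero[OF assms] by (simp add: stay_prob_def)
  then have "AE \<omega> in step_space p. of_bool (\<not> exits N x \<omega>) = (0::real)"
    by (subst (asm) integral_nonneg_eq_0_iff_AE)
       (auto intro!: S.integrable_const_bound[where B=1])
  then show ?thesis by simp
qed

end


section \<open>Parity correlations\<close>

definition parity_sign :: "nat \<Rightarrow> ('i \<Rightarrow> nat) \<Rightarrow> 'i set \<Rightarrow> nat \<Rightarrow> bool stream \<Rightarrow> real" where
  "parity_sign N y T x \<omega> = (\<Prod>i\<in>T. (-1) ^ visits N x (y i) \<omega>)"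

definition parity_corr :: "real \<Rightarrow> nat \<Rightarrow> ('i \<Rightarrow> nat) \<Rightarrow> 'i set \<Rightarrow> nat \<Rightarrow> real" where
  "parity_corr p N y T x = (\<integral>\<omega>. parity_sign N y T x \<omega> \<partial>step_space p)"

definition flip_sign :: "('i \<Rightarrow> nat) \<Rightarrow> 'i set \<Rightarrow> nat \<Rightarrow> real" where
  "flip_sign y T x = (\<Prod>i\<in>T. if y i = x then -1 else 1)"

lemma measurable_parity_sign[measurable]:
  "parity_sign N y T x \<in> borel_measurable (step_space p)"
  unfolding parity_sign_def by measurable

lemma abs_parity_sign: "\<bar>parity_sign N y T x \<omega>\<bar> \<le> 1"
  unfolding parity_sign_def by (simp add: abs_prod power_abs prod_le_1)

lemma abs_flip_sign: "\<bar>flip_sign y T x\<bar> = 1"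
  unfolding flip_sign_def abs_prod by (rule prod.neutral) simp

lemma parity_corr_boundary:
  assumes y: "\<And>i. i \<in> T \<Longrightarrow> 0 < y i \<and> y i < N" and x: "x = 0 \<or> x = N"
  shows "parity_corr p N y T x = 1"
proof -
  interpret S: prob_space "step_space p" by (rule prob_space_step_space)
  have "parity_sign N y T x = (\<lambda>_. 1)"
    unfolding parity_sign_def using y x by (intro ext prod.neutral) (simp add: visits_absorbed)
  then show ?thesis unfolding parity_corr_def by (simp add: S.prob_space)
qed

lemma parity_sign_Cons:
  assumes y: "\<And>i. i \<in> T \<Longrightarrow> 0 < y i \<and> y i < N" and "exits N x (b ## \<omega>)"
  shows "parity_sign N y T x (b ## \<omega>) = flip_sign y T x * parity_sign N y T (walk_step N x b) \<omega>"
  unfolding parity_sign_def flip_sign_def prod.distrib[symmetric]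
  using y assms(2) by (intro prod.cong refl) (auto simp: visits_Cons power_add)

context drifted_walk
begin

lemma parity_corr_equation:
  assumes y: "\<And>i. i \<in> T \<Longrightarrow> 0 < y i \<and> y i < N" and x: "0 < x" "x < N"
  shows "parity_corr p N y T x =
    flip_sign y T x * (p * parity_corr p N y T (x + 1) + q * parity_corr p N y T (x - 1))"
proof -
  have step: "(\<integral>\<omega>. parity_sign N y T x (b ## \<omega>) \<partial>step_space p)
      = flip_sign y T x * parity_corr p N y T (walk_step N x b)" for b
  proof -
    have "AE \<omega> in step_space p. exits N x (b ## \<omega>)"
      using AE_exits[OF walk_step_le[of x N b]] x by (simp add: exits_Cons)
    then have "(\<integral>\<omega>. parity_sign N y T x (b ## \<omega>) \<partial>step_space p)
        = (\<integral>\<omega>. flip_sign y T x * parity_sign N y T (walk_step N x b) \<omega> \<partial>step_space p)"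
      by (intro integral_cong_AE) (auto simp: parity_sign_Cons[OF y] elim!: AE_mp)
    then show ?thesis unfolding parity_corr_def by simp
  qed
  show ?thesis
    unfolding parity_corr_def
    by (subst integral_first_step_walk[where B=1])
       (use abs_parity_sign x in \<open>auto simp: step[unfolded parity_corr_def] walk_step_interior algebra_simps\<close>)
qed

end


section \<open>Stability of the twisted equation\<close>

context drifted_walk
begin

text \<open>Two barriers for the generator \<open>L h(z) = p h(z+1) + q h(z-1)\<close>: the linear function
  \<open>N - z\<close> decreases by the drift \<open>p - q\<close>, and \<open>\<rho>^z\<close> is multiplied by \<open>p \<rho> + q / \<rho>\<close>.\<close>
lemma linear_barrier:
  assumes "0 < z"
  shows "p * (real N - real (z + 1)) + q * (real N - real (z - 1)) = (real N - real z) - (p - q)"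
proof -
  have "real (z - 1) = real z - 1" using assms by simp
  then have "p * (real N - real (z + 1)) + q * (real N - real (z - 1))
      = (p + q) * (real N - real z) - (p - q)"
    by (simp add: algebra_simps)
  then show ?thesis using p_plus_q by simp
qed

lemma geometric_barrier:
  fixes \<rho> :: real
  assumes "0 < z" "0 < \<rho>"
  shows "p * \<rho> ^ (z + 1) + q * \<rho> ^ (z - 1) = (p * \<rho> + q / \<rho>) * \<rho> ^ z"
proof -
  have "\<rho> ^ (z - 1) = \<rho> ^ z / \<rho>" using assms by (simp add: power_diff)
  then show ?thesis by (simp add: algebra_simps)
qed

lemma twisted_difference_bound:
  fixes u0 u1 u2 v0 v1 v2 s \<delta> :: real
  assumes "\<bar>s\<bar> = 1" and "u0 = s * (p * u1 + q * u2)" and "\<bar>v0 - s * (p * v1 + q * v2)\<bar> \<le> \<delta>"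
  shows "\<bar>u0 - v0\<bar> \<le> p * \<bar>u1 - v1\<bar> + q * \<bar>u2 - v2\<bar> + \<delta>"
proof -
  have "u0 - v0 = s * (p * (u1 - v1) + q * (u2 - v2)) - (v0 - s * (p * v1 + q * v2))"
    using assms(2) by (simp add: algebra_simps)
  also have "\<bar>\<dots>\<bar> \<le> \<bar>p * (u1 - v1)\<bar> + \<bar>q * (u2 - v2)\<bar> + \<delta>"
    using assms(1,3) abs_triangle_ineq[of "p * (u1 - v1)" "q * (u2 - v2)"]
    by (simp add: abs_mult order_trans[OF abs_triangle_ineq4])
  finally show ?thesis
    using p_pos q_pos by (simp add: abs_mult)
qed

text \<open>This is where the
  drift \<open>q < p\<close> enters: the error \<open>\<epsilon>\<close> is amplified only by \<open>N / (p - q)\<close>.\<close>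
lemma twisted_equation_stability:
  fixes u v s :: "nat \<Rightarrow> real" and \<epsilon> K \<rho> :: real
  assumes s: "\<And>z. \<bar>s z\<bar> = 1"
    and u_eq: "\<And>z. 0 < z \<Longrightarrow> z < N \<Longrightarrow> u z = s z * (p * u (z + 1) + q * u (z - 1))"
    and v_eq: "\<And>z. 0 < z \<Longrightarrow> z < N \<Longrightarrow>
      \<bar>v z - s z * (p * v (z + 1) + q * v (z - 1))\<bar> \<le> \<epsilon> + K * \<rho> ^ z"
    and boundary: "u 0 = v 0" "u N = v N"
    and \<rho>: "0 < \<rho>" "p * \<rho> + q / \<rho> < 1" and \<epsilon>: "0 \<le> \<epsilon>" and K: "0 \<le> K"
    and x: "x \<le> N"
  shows "\<bar>u x - v x\<bar> \<le> \<epsilon> * (real N - real x) / (p - q) + K / (1 - (p * \<rho> + q / \<rho>)) * \<rho> ^ x"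
proof -
  define c where "c = K / (1 - (p * \<rho> + q / \<rho>))"
  have gap: "0 < 1 - (p * \<rho> + q / \<rho>)" using \<rho> by simp
  then have "c * (1 - (p * \<rho> + q / \<rho>)) = K" unfolding c_def by simp
  then have c: "0 \<le> c" "c * (p * \<rho> + q / \<rho>) = c - K"
    unfolding c_def using gap K by (simp_all add: right_diff_distrib)
  have drift: "0 < p - q" using q_less_p by simp
  define e where "e = \<epsilon> / (p - q)"
  have e: "0 \<le> e" "e * (p - q) = \<epsilon>" unfolding e_def using drift \<epsilon> by auto
  define D where "D z = \<bar>u z - v z\<bar>" for z
  define H where "H z = D z - e * (real N - real z) - c * \<rho> ^ z" for z
  have D_sub: "D z \<le> p * D (z + 1) + q * D (z - 1) + \<epsilon> + K * \<rho> ^ z" if z: "0 < z" "z < N" for z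
    unfolding D_def using twisted_difference_bound[OF s u_eq[OF z] v_eq[OF z]] by (simp add: add.assoc)
  have H_sub: "H z \<le> p * H (z + 1) + q * H (z - 1)" if z: "0 < z" "z < N" for z
  proof -
    have "p * (e * (real N - real (z + 1))) + q * (e * (real N - real (z - 1)))
        = e * (p * (real N - real (z + 1)) + q * (real N - real (z - 1)))"
      by (simp add: algebra_simps)
    also have "\<dots> = e * (real N - real z) - \<epsilon>"
      unfolding linear_barrier[OF z(1)] e(2)[symmetric] by (simp add: algebra_simps)
    finally have linear: "p * (e * (real N - real (z + 1))) + q * (e * (real N - real (z - 1)))
        = e * (real N - real z) - \<epsilon>" .
    have "p * (c * \<rho> ^ (z + 1)) + q * (c * \<rho> ^ (z - 1)) = c * (p * \<rho> ^ (z + 1) + q * \<rho> ^ (z - 1))"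
      by (simp add: algebra_simps)
    also have "\<dots> = (c * (p * \<rho> + q / \<rho>)) * \<rho> ^ z"
      unfolding geometric_barrier[OF z(1) \<rho>(1)] by simp
    also have "\<dots> = c * \<rho> ^ z - K * \<rho> ^ z"
      unfolding c(2) by (simp add: algebra_simps)
    finally show ?thesis
      using D_sub[OF z] linear unfolding H_def by (simp add: algebra_simps)
  qed
  have "H x \<le> max (H 0) (H N)"
    using p_pos q_pos p_plus_q H_sub x by (rule discrete_maximum_principle)
  moreover have "H 0 \<le> 0" "H N \<le> 0"
    unfolding H_def D_def using boundary c(1) \<rho>(1) mult_nonneg_nonneg[OF e(1), of "real N"]
    by simp_all
  ultimately have "H x \<le> 0" by linarith
  then show ?thesis unfolding H_def D_def c_def e_def by simp
qed

end


context drifted_walk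
begin

text \<open>The generator is not multiplicative: \<open>L(f V) = L f \<cdot> L V + p q \<Delta>f \<Delta>V\<close>, where \<open>\<Delta>\<close>
  is the central difference.  Hence multiplying an approximate solution \<open>V\<close> by an exact
  solution \<open>f\<close> only adds the defect \<open>p q |\<Delta>f| |\<Delta>V|\<close>.\<close>
lemma product_defect_step:
  fixes f0 f1 f2 V0 V1 V2 \<sigma> s :: real
  assumes f_eq: "f0 = \<sigma> * (p * f1 + q * f2)" and "\<bar>\<sigma>\<bar> = 1" "\<bar>s\<bar> = 1" "\<bar>f0\<bar> \<le> 1"
  shows "\<bar>f0 * V0 - (\<sigma> * s) * (p * (f1 * V1) + q * (f2 * V2))\<bar>
    \<le> \<bar>V0 - s * (p * V1 + q * V2)\<bar> + p * q * (\<bar>f1 - f2\<bar> * \<bar>V1 - V2\<bar>)"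
proof -
  have "p * (f1 * V1) + q * (f2 * V2) = (p * f1 + q * f2) * (p * V1 + q * V2) + p * q * (f1 - f2) * (V1 - V2)"
    unfolding q_def by (simp add: algebra_simps)
  then have "f0 * V0 - (\<sigma> * s) * (p * (f1 * V1) + q * (f2 * V2))
      = f0 * (V0 - s * (p * V1 + q * V2)) - \<sigma> * s * (p * q * (f1 - f2) * (V1 - V2))"
    unfolding f_eq by (simp add: algebra_simps)
  also have "\<bar>\<dots>\<bar> \<le> \<bar>f0\<bar> * \<bar>V0 - s * (p * V1 + q * V2)\<bar> + p * q * (\<bar>f1 - f2\<bar> * \<bar>V1 - V2\<bar>)"
    using assms p_pos q_pos by (simp add: abs_mult abs_triangle_ineq4 order_trans[OF abs_triangle_ineq4])
  also have "\<dots> \<le> \<bar>V0 - s * (p * V1 + q * V2)\<bar> + p * q * (\<bar>f1 - f2\<bar> * \<bar>V1 - V2\<bar>)"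
    using assms by (simp add: mult_left_le_one_le)
  finally show ?thesis .
qed

lemma product_defect:
  fixes F \<sigma> :: "'i \<Rightarrow> nat \<Rightarrow> real"
  assumes "finite T"
    and F_eq: "\<And>i z. i \<in> T \<Longrightarrow> 0 < z \<Longrightarrow> z < N \<Longrightarrow> F i z = \<sigma> i z * (p * F i (z + 1) + q * F i (z - 1))"
    and F_bound: "\<And>i z. i \<in> T \<Longrightarrow> z \<le> N \<Longrightarrow> \<bar>F i z\<bar> \<le> 1"
    and \<sigma>: "\<And>i z. i \<in> T \<Longrightarrow> \<bar>\<sigma> i z\<bar> = 1"
    and z: "0 < z" "z < N"
  shows "\<bar>(\<Prod>i\<in>T. F i z) - (\<Prod>i\<in>T. \<sigma> i z) * (p * (\<Prod>i\<in>T. F i (z + 1)) + q * (\<Prod>i\<in>T. F i (z - 1)))\<bar>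
    \<le> p * q * ((\<Sum>i\<in>T. \<bar>F i (z + 1) - F i (z - 1)\<bar>)\<^sup>2 - (\<Sum>i\<in>T. \<bar>F i (z + 1) - F i (z - 1)\<bar>\<^sup>2))"
  using assms(1) F_eq F_bound \<sigma>
proof (induction T rule: finite_induct)
  case empty
  then show ?case using p_plus_q by simp
next
  case (insert a T)
  define V where "V w = (\<Prod>i\<in>T. F i w)" for w
  define e where "e i = \<bar>F i (z + 1) - F i (z - 1)\<bar>" for i
  let ?s = "\<Prod>i\<in>T. \<sigma> i z"
  have IH: "\<bar>V z - ?s * (p * V (z + 1) + q * V (z - 1))\<bar> \<le> p * q * ((\<Sum>i\<in>T. e i)\<^sup>2 - (\<Sum>i\<in>T. (e i)\<^sup>2))"
    unfolding V_def e_def using insert by simp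
  have V_diff: "\<bar>V (z + 1) - V (z - 1)\<bar> \<le> (\<Sum>i\<in>T. e i)"
    unfolding V_def e_def using norm_prod_diff[of T "\<lambda>i. F i (z + 1)" "\<lambda>i. F i (z - 1)"] insert.prems(2) z
    by simp
  have "\<bar>F a z * V z - (\<sigma> a z * ?s) * (p * (F a (z + 1) * V (z + 1)) + q * (F a (z - 1) * V (z - 1)))\<bar>
      \<le> \<bar>V z - ?s * (p * V (z + 1) + q * V (z - 1))\<bar> + p * q * (e a * \<bar>V (z + 1) - V (z - 1)\<bar>)"
    unfolding e_def
  proof (rule product_defect_step)
    show "F a z = \<sigma> a z * (p * F a (z + 1) + q * F a (z - 1))"
      using insert.prems(1) z by simp
    show "\<bar>F a z\<bar> \<le> 1" "\<bar>\<sigma> a z\<bar> = 1"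
      using insert.prems(2,3) z by simp_all
    show "\<bar>?s\<bar> = 1"
      using insert.prems(3) by (auto simp: abs_prod intro!: prod.neutral)
  qed
  also have "\<dots> \<le> p * q * ((\<Sum>i\<in>T. e i)\<^sup>2 - (\<Sum>i\<in>T. (e i)\<^sup>2)) + p * q * (2 * e a * (\<Sum>i\<in>T. e i))"
  proof -
    have e_nonneg: "0 \<le> e i" for i unfolding e_def by simp
    have "e a * \<bar>V (z + 1) - V (z - 1)\<bar> \<le> e a * (\<Sum>i\<in>T. e i)"
      using V_diff e_nonneg by (rule mult_left_mono)
    also have "\<dots> \<le> 2 * e a * (\<Sum>i\<in>T. e i)"
      using e_nonneg by (simp add: sum_nonneg)
    finally show ?thesis
      using IH p_pos q_pos by (intro add_mono mult_left_mono) auto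
  qed
  also have "\<dots> = p * q * ((\<Sum>i\<in>insert a T. e i)\<^sup>2 - (\<Sum>i\<in>insert a T. (e i)\<^sup>2))"
    using insert.hyps by (simp add: power2_eq_square algebra_simps)
  finally show ?case
    using insert.hyps unfolding V_def e_def by (simp add: mult.assoc)
qed

end


section \<open>The exact solution for a single site\<close>

context drifted_walk
begin

text \<open>Functions \<open>A + B r^z\<close> with \<open>r = q / p\<close> are harmonic for the walk.  For one site \<open>t\<close>
  the twisted equation is solved by \<open>1 + a \<cdot> tent\<close>, where the tent is harmonic on
  \<open>[0, t]\<close> and on \<open>[t, N]\<close>, equals \<open>1\<close> at \<open>t\<close> and \<open>0\<close> at \<open>0, N\<close>, and the constant
  \<open>a\<close> is chosen so that the equation at \<open>t\<close> flips sign.\<close>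
definition ratio :: real where "ratio = q / p"

lemma ratio_pos: "0 < ratio" and ratio_less_1: "ratio < 1"
  and p_ratio: "p * ratio + q / ratio = 1"
  using p_pos q_pos q_less_p p_plus_q unfolding ratio_def by (auto simp: field_simps)

lemma affine_harmonic:
  assumes "0 < z"
  shows "p * (A + B * ratio ^ (z + 1)) + q * (A + B * ratio ^ (z - 1)) = A + B * ratio ^ z"
proof -
  have "p * (A + B * ratio ^ (z + 1)) + q * (A + B * ratio ^ (z - 1))
      = (p + q) * A + B * (p * ratio ^ (z + 1) + q * ratio ^ (z - 1))"
    by (simp add: algebra_simps)
  also have "\<dots> = A + B * ratio ^ z"
    unfolding geometric_barrier[OF assms ratio_pos] p_ratio p_plus_q by simp
  finally show ?thesis .
qed

definition up_profile :: "nat \<Rightarrow> nat \<Rightarrow> real" where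
  "up_profile t z = (1 - ratio ^ z) / (1 - ratio ^ t)"

definition down_profile :: "nat \<Rightarrow> nat \<Rightarrow> nat \<Rightarrow> real" where
  "down_profile N t z = (ratio ^ z - ratio ^ N) / (ratio ^ t - ratio ^ N)"

definition tent :: "nat \<Rightarrow> nat \<Rightarrow> nat \<Rightarrow> real" where
  "tent N t z = (if z \<le> t then up_profile t z else down_profile N t z)"

definition tent_coeff :: "nat \<Rightarrow> nat \<Rightarrow> real" where
  "tent_coeff N t = - 2 / (1 + (p * down_profile N t (t + 1) + q * up_profile t (t - 1)))"

definition one_site :: "nat \<Rightarrow> nat \<Rightarrow> nat \<Rightarrow> real" where
  "one_site N t z = 1 + tent_coeff N t * tent N t z"

lemma ratio_power_less_1: "0 < t \<Longrightarrow> ratio ^ t < 1"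
  using ratio_pos ratio_less_1 by (simp add: power_less_one_iff)

lemma ratio_power_strict_decreasing: "t < N \<Longrightarrow> ratio ^ N < ratio ^ t"
  using ratio_pos ratio_less_1 by (simp add: power_strict_decreasing)

lemma ratio_power_decreasing: "t \<le> N \<Longrightarrow> ratio ^ N \<le> ratio ^ t"
  using ratio_pos ratio_less_1 by (simp add: power_decreasing)

lemma up_profile_harmonic:
  "0 < z \<Longrightarrow> p * up_profile t (z + 1) + q * up_profile t (z - 1) = up_profile t z"
  unfolding up_profile_def diff_divide_distrib
  using affine_harmonic[of z "1 / (1 - ratio ^ t)" "- 1 / (1 - ratio ^ t)"] by simp

lemma down_profile_harmonic:
  "0 < z \<Longrightarrow> p * down_profile N t (z + 1) + q * down_profile N t (z - 1) = down_profile N t z"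
  unfolding down_profile_def diff_divide_distrib
  using affine_harmonic[of z "- (ratio ^ N) / (ratio ^ t - ratio ^ N)" "1 / (ratio ^ t - ratio ^ N)"]
  by simp

lemma profile_values:
  assumes "0 < t" "t < N"
  shows "up_profile t 0 = 0" "up_profile t t = 1" "down_profile N t t = 1" "down_profile N t N = 0"
  using assms ratio_power_less_1[of t] ratio_power_strict_decreasing[of t N]
  by (simp_all add: up_profile_def down_profile_def)

lemma tent_values:
  assumes "0 < t" "t < N"
  shows "tent N t 0 = 0" "tent N t t = 1" "tent N t N = 0"
  using assms profile_values[OF assms] by (simp_all add: tent_def)

lemma tent_right: "0 < t \<Longrightarrow> t < N \<Longrightarrow> t \<le> z \<Longrightarrow> tent N t z = down_profile N t z"
  using profile_values[of t N] by (auto simp: tent_def)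

lemma tent_bounds:
  assumes "0 < t" "t < N" "z \<le> N"
  shows "0 \<le> tent N t z \<and> tent N t z \<le> 1"
proof (cases "z \<le> t")
  case True
  then have "ratio ^ t \<le> ratio ^ z" "ratio ^ z \<le> 1"
    using ratio_power_decreasing[of z t] ratio_pos ratio_less_1 by (auto simp: power_le_one)
  then show ?thesis
    using True ratio_power_less_1[OF assms(1)] by (auto simp: tent_def up_profile_def divide_simps)
next
  case False
  then have "ratio ^ z \<le> ratio ^ t" "ratio ^ N \<le> ratio ^ z"
    using ratio_power_decreasing[of t z] ratio_power_decreasing[of z N] assms by auto
  then show ?thesis
    using False ratio_power_strict_decreasing[OF assms(2)]
    by (auto simp: tent_def down_profile_def divide_simps)
qed

lemma tent_coeff_bounds:
  assumes "0 < t" "t < N"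
  shows "-2 \<le> tent_coeff N t \<and> tent_coeff N t \<le> -1"
proof -
  let ?m = "p * down_profile N t (t + 1) + q * up_profile t (t - 1)"
  have "tent N t (t + 1) = down_profile N t (t + 1)" "tent N t (t - 1) = up_profile t (t - 1)"
    using assms by (simp_all add: tent_right tent_def)
  then have "0 \<le> ?m \<and> ?m \<le> p + q"
    using tent_bounds[OF assms, of "t + 1"] tent_bounds[OF assms, of "t - 1"] assms p_pos q_pos
    by (auto intro!: add_mono mult_left_le add_nonneg_nonneg)
  then show ?thesis unfolding tent_coeff_def using p_plus_q by (auto simp: divide_simps)
qed

lemma one_site_bound:
  assumes "0 < t" "t < N" "z \<le> N"
  shows "\<bar>one_site N t z\<bar> \<le> 1"
proof -
  have "- 2 \<le> tent_coeff N t * tent N t z" "tent_coeff N t * tent N t z \<le> 0"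
    using tent_bounds[OF assms] tent_coeff_bounds[OF assms(1,2)]
    by (auto intro: order_trans[OF _ mult_right_mono[of "- 2" "tent_coeff N t"]]
             simp: mult_nonpos_nonneg)
  then show ?thesis unfolding one_site_def by auto
qed

lemma one_site_boundary: "0 < t \<Longrightarrow> t < N \<Longrightarrow> one_site N t 0 = 1 \<and> one_site N t N = 1"
  by (simp add: one_site_def tent_values)

lemma one_site_equation:
  assumes t: "0 < t" "t < N" and z: "0 < z" "z < N"
  shows "one_site N t z = (if t = z then -1 else 1) * (p * one_site N t (z + 1) + q * one_site N t (z - 1))"
proof -
  let ?a = "tent_coeff N t"
  let ?m = "p * tent N t (z + 1) + q * tent N t (z - 1)"
  have mean: "p * one_site N t (z + 1) + q * one_site N t (z - 1) = 1 + ?a * ?m"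
    unfolding one_site_def using p_plus_q by (simp add: algebra_simps)
  consider "z < t" | "z = t" | "t < z" by linarith
  then show ?thesis
  proof cases
    case 1
    then have "z + 1 \<le> t" "z - 1 \<le> t" by simp_all
    then have "?m = tent N t z"
      using up_profile_harmonic[OF z(1), of t] 1 by (simp add: tent_def)
    then show ?thesis using 1 unfolding mean by (simp add: one_site_def)
  next
    case 2
    then have "?m = p * down_profile N t (t + 1) + q * up_profile t (t - 1)"
      using t by (simp add: tent_right tent_def)
    moreover have "0 \<le> ?m" using tent_bounds[OF t] z p_pos q_pos by simp
    ultimately have "1 + ?a * ?m = - (1 + ?a)"
      unfolding tent_coeff_def by (simp add: field_simps)
    then show ?thesis using 2 t unfolding mean by (simp add: one_site_def tent_values)
  next
    case 3
    then have "?m = tent N t z"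
      using down_profile_harmonic[OF z(1), of N t] t by (simp add: tent_right)
    then show ?thesis using 3 unfolding mean by (simp add: one_site_def)
  qed
qed

end


definition nat_dist :: "nat \<Rightarrow> nat \<Rightarrow> nat" where
  "nat_dist z t = (if z \<le> t then t - z else z - t)"

lemma nat_dist_triangle: "nat_dist t t' \<le> nat_dist z t + nat_dist z t'"
  unfolding nat_dist_def by auto

lemma real_nat_dist: "real (nat_dist t t') = \<bar>real t - real t'\<bar>"
  unfolding nat_dist_def by (auto simp: of_nat_diff)

context drifted_walk
begin

lemma ratio_gap_pos: "0 < ratio * (1 - ratio)"
  using ratio_pos ratio_less_1 by simp

lemma ratio_power_gradient:
  assumes "0 < z"
  shows "0 \<le> ratio ^ (z - 1) - ratio ^ (z + 1)" "ratio ^ (z - 1) - ratio ^ (z + 1) \<le> ratio ^ z / ratio"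
proof -
  show "0 \<le> ratio ^ (z - 1) - ratio ^ (z + 1)"
    using ratio_power_decreasing[of "z - 1" "z + 1"] by simp
  have "ratio ^ (z - 1) = ratio ^ z / ratio" using assms ratio_pos by (simp add: power_diff)
  then show "ratio ^ (z - 1) - ratio ^ (z + 1) \<le> ratio ^ z / ratio" using ratio_pos by simp
qed

text \<open>The tent has gradient of order \<open>r^z\<close> near the left boundary and \<open>r^{|z - t|}\<close> near
  its peak; in particular tents of sites far apart have almost disjoint gradients.\<close>
lemma tent_gradient:
  assumes t: "0 < t" "t < N" and z: "0 < z" "z < N"
  shows "\<bar>tent N t (z + 1) - tent N t (z - 1)\<bar> \<le> (ratio ^ z + ratio ^ nat_dist z t) / (ratio * (1 - ratio))"
proof -
  note grad = ratio_power_gradient[OF z(1)]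
  have nonneg: "0 \<le> ratio ^ n" for n using ratio_pos by simp
  have to_sum: "ratio ^ z / (ratio * (1 - ratio)) \<le> (ratio ^ z + ratio ^ nat_dist z t) / (ratio * (1 - ratio))"
    "ratio ^ nat_dist z t / (ratio * (1 - ratio)) \<le> (ratio ^ z + ratio ^ nat_dist z t) / (ratio * (1 - ratio))"
    using ratio_gap_pos nonneg by (auto intro!: divide_right_mono)
  consider "z < t" | "z = t" | "t < z" by linarith
  then show ?thesis
  proof cases
    case 1
    have "1 - ratio \<le> 1 - ratio ^ t"
      using ratio_power_decreasing[of 1 t] t by simp
    have "z + 1 \<le> t" "z - 1 \<le> t" using 1 by auto
    then have "tent N t (z + 1) - tent N t (z - 1) = (ratio ^ (z - 1) - ratio ^ (z + 1)) / (1 - ratio ^ t)"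
      by (simp add: tent_def up_profile_def diff_divide_distrib)
    then have "\<bar>tent N t (z + 1) - tent N t (z - 1)\<bar> = (ratio ^ (z - 1) - ratio ^ (z + 1)) / (1 - ratio ^ t)"
      using grad ratio_power_less_1[OF t(1)] by simp
    also have "\<dots> \<le> (ratio ^ z / ratio) / (1 - ratio)"
      using grad ratio_less_1 \<open>1 - ratio \<le> 1 - ratio ^ t\<close> by (intro frac_le) auto
    finally show ?thesis
      using to_sum by simp
  next
    case 2
    have "0 \<le> tent N t (z + 1) \<and> tent N t (z + 1) \<le> 1" "0 \<le> tent N t (z - 1) \<and> tent N t (z - 1) \<le> 1"
      using z by (intro tent_bounds[OF t]; simp)+
    then have "\<bar>tent N t (z + 1) - tent N t (z - 1)\<bar> \<le> 1" by (simp add: abs_le_iff)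
    also have "\<dots> \<le> ratio ^ nat_dist z t / (ratio * (1 - ratio))"
      using 2 ratio_gap_pos ratio_pos ratio_less_1 by (simp add: nat_dist_def mult_le_one)
    finally show ?thesis
      using to_sum by simp
  next
    case 3
    have "ratio ^ N = ratio ^ t * ratio ^ (N - t)" using t by (simp add: power_add[symmetric])
    moreover have "ratio ^ (N - t) \<le> ratio"
      using ratio_power_decreasing[of 1 "N - t"] t by simp
    ultimately have gap: "ratio ^ t * (1 - ratio) \<le> ratio ^ t - ratio ^ N"
      using mult_left_mono[OF \<open>ratio ^ (N - t) \<le> ratio\<close> nonneg[of t]] by (simp add: algebra_simps)
    have "tent N t (z + 1) - tent N t (z - 1) = - ((ratio ^ (z - 1) - ratio ^ (z + 1)) / (ratio ^ t - ratio ^ N))"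
      using 3 t by (simp add: tent_right down_profile_def diff_divide_distrib)
    then have "\<bar>tent N t (z + 1) - tent N t (z - 1)\<bar> = (ratio ^ (z - 1) - ratio ^ (z + 1)) / (ratio ^ t - ratio ^ N)"
      using grad ratio_power_strict_decreasing[OF t(2)] by simp
    also have "\<dots> \<le> (ratio ^ z / ratio) / (ratio ^ t * (1 - ratio))"
      using grad gap ratio_pos ratio_less_1 by (intro frac_le) auto
    also have "\<dots> = ratio ^ nat_dist z t / (ratio * (1 - ratio))"
    proof -
      have "ratio ^ z = ratio ^ nat_dist z t * ratio ^ t"
        using 3 by (simp add: nat_dist_def power_add[symmetric])
      then show ?thesis using ratio_pos ratio_less_1 by (simp add: field_simps)
    qed
    finally show ?thesis
      using to_sum by simp
  qed
qed

lemma one_site_gradient: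
  assumes "0 < t" "t < N" "0 < z" "z < N"
  shows "\<bar>one_site N t (z + 1) - one_site N t (z - 1)\<bar>
    \<le> 2 * ((ratio ^ z + ratio ^ nat_dist z t) / (ratio * (1 - ratio)))"
proof -
  have "\<bar>one_site N t (z + 1) - one_site N t (z - 1)\<bar>
      = \<bar>tent_coeff N t\<bar> * \<bar>tent N t (z + 1) - tent N t (z - 1)\<bar>"
    unfolding one_site_def by (simp add: abs_mult[symmetric] algebra_simps)
  also have "\<dots> \<le> 2 * ((ratio ^ z + ratio ^ nat_dist z t) / (ratio * (1 - ratio)))"
    using tent_coeff_bounds[OF assms(1,2)] tent_gradient[OF assms] by (intro mult_mono) auto
  finally show ?thesis .
qed

lemma gradient_product_bound:
  "(ratio ^ z + ratio ^ nat_dist z t) * (ratio ^ z + ratio ^ nat_dist z t')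
    \<le> 3 * ratio ^ z + ratio ^ nat_dist t t'"
proof -
  have le1: "ratio ^ n \<le> 1" and nonneg: "0 \<le> ratio ^ n" for n
    using ratio_pos ratio_less_1 by (simp_all add: power_le_one)
  have absorb: "ratio ^ z * ratio ^ n \<le> ratio ^ z" for n
    using le1 nonneg by (simp add: mult_right_le_one_le)
  have far: "ratio ^ nat_dist z t * ratio ^ nat_dist z t' \<le> ratio ^ nat_dist t t'"
    unfolding power_add[symmetric] using ratio_pos ratio_less_1 nat_dist_triangle
    by (intro power_decreasing) auto
  have "(ratio ^ z + ratio ^ nat_dist z t) * (ratio ^ z + ratio ^ nat_dist z t')
      = ratio ^ z * ratio ^ z + ratio ^ z * ratio ^ nat_dist z t' + ratio ^ z * ratio ^ nat_dist z t
        + ratio ^ nat_dist z t * ratio ^ nat_dist z t'"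
    by (simp add: algebra_simps)
  also have "\<dots> \<le> 3 * ratio ^ z + ratio ^ nat_dist t t'"
    using absorb[of z] absorb[of "nat_dist z t'"] absorb[of "nat_dist z t"] far by linarith
  finally show ?thesis .
qed

end

lemma square_sum_minus_sum_squares:
  fixes e :: "'i \<Rightarrow> real"
  assumes "finite T"
  shows "(\<Sum>i\<in>T. e i)\<^sup>2 - (\<Sum>i\<in>T. (e i)\<^sup>2) = (\<Sum>i\<in>T. \<Sum>j\<in>T - {i}. e i * e j)"
proof -
  have "(\<Sum>i\<in>T. e i)\<^sup>2 = (\<Sum>i\<in>T. \<Sum>j\<in>T. e i * e j)" by (simp add: power2_eq_square sum_product)
  also have "\<dots> = (\<Sum>i\<in>T. (e i)\<^sup>2 + (\<Sum>j\<in>T - {i}. e i * e j))"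
    using assms by (intro sum.cong refl) (simp add: sum.remove power2_eq_square)
  finally show ?thesis by (simp add: sum.distrib)
qed


section \<open>Parity correlations are asymptotically products\<close>

context drifted_walk
begin

definition decay :: real where "decay = (1 + ratio) / 2"

lemma decay: "0 < decay" "decay < 1" "ratio \<le> decay" "p * decay + q / decay < 1"
proof -
  show "0 < decay" "decay < 1" "ratio \<le> decay"
    unfolding decay_def using ratio_pos ratio_less_1 by auto
  have "(decay - 1) * (p * decay - q) < 0"
    using ratio_less_1 p_pos q_less_p unfolding decay_def ratio_def
    by (intro mult_neg_pos) (auto simp: field_simps)
  moreover have "p * decay + q * decay = decay"
    using p_plus_q by (simp add: distrib_right[symmetric])
  ultimately have "p * decay * decay + q < decay"
    by (simp add: algebra_simps)
  then show "p * decay + q / decay < 1"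
    using \<open>0 < decay\<close> by (simp add: field_simps)
qed

definition grad_const :: real where "grad_const = (2 / (ratio * (1 - ratio)))\<^sup>2"

definition pair_error :: "('i \<Rightarrow> nat) \<Rightarrow> 'i set \<Rightarrow> real" where
  "pair_error y T = p * q * grad_const * (\<Sum>i\<in>T. \<Sum>j\<in>T - {i}. ratio ^ nat_dist (y i) (y j))"

definition boundary_error :: "'i set \<Rightarrow> real" where
  "boundary_error T = 3 * p * q * grad_const * (real (card T))\<^sup>2"

lemma errors_nonneg: "0 \<le> pair_error y T" "0 \<le> boundary_error T"
  unfolding pair_error_def boundary_error_def grad_const_def using p_pos q_pos ratio_pos
  by (auto intro!: sum_nonneg mult_nonneg_nonneg)

lemma one_site_gradient_product:
  assumes "0 < t" "t < N" "0 < t'" "t' < N" "0 < z" "z < N"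
  shows "\<bar>one_site N t (z + 1) - one_site N t (z - 1)\<bar> * \<bar>one_site N t' (z + 1) - one_site N t' (z - 1)\<bar>
    \<le> grad_const * (3 * decay ^ z + ratio ^ nat_dist t t')"
proof -
  have "\<bar>one_site N t (z + 1) - one_site N t (z - 1)\<bar> * \<bar>one_site N t' (z + 1) - one_site N t' (z - 1)\<bar>
      \<le> (2 * ((ratio ^ z + ratio ^ nat_dist z t) / (ratio * (1 - ratio))))
        * (2 * ((ratio ^ z + ratio ^ nat_dist z t') / (ratio * (1 - ratio))))"
    using one_site_gradient assms ratio_gap_pos ratio_pos by (intro mult_mono) auto
  also have "\<dots> = grad_const * ((ratio ^ z + ratio ^ nat_dist z t) * (ratio ^ z + ratio ^ nat_dist z t'))"
    unfolding grad_const_def by (simp add: power2_eq_square field_simps)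
  also have "\<dots> \<le> grad_const * (3 * ratio ^ z + ratio ^ nat_dist t t')"
    by (intro mult_left_mono gradient_product_bound) (simp add: grad_const_def)
  also have "\<dots> \<le> grad_const * (3 * decay ^ z + ratio ^ nat_dist t t')"
    using decay ratio_pos by (intro mult_left_mono add_right_mono power_mono) (auto simp: grad_const_def)
  finally show ?thesis .
qed

lemma cross_terms_bound:
  fixes y :: "'i \<Rightarrow> nat"
  assumes T: "finite T" and y: "\<And>i. i \<in> T \<Longrightarrow> 0 < y i \<and> y i < N" and z: "0 < z" "z < N"
  defines "e \<equiv> \<lambda>i. \<bar>one_site N (y i) (z + 1) - one_site N (y i) (z - 1)\<bar>"
  shows "p * q * (\<Sum>i\<in>T. \<Sum>j\<in>T - {i}. e i * e j) \<le> pair_error y T + boundary_error T * decay ^ z"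
proof -
  have "(\<Sum>i\<in>T. \<Sum>j\<in>T - {i}. e i * e j)
      \<le> (\<Sum>i\<in>T. \<Sum>j\<in>T - {i}. grad_const * (3 * decay ^ z + ratio ^ nat_dist (y i) (y j)))"
    unfolding e_def using y z by (intro sum_mono one_site_gradient_product) auto
  also have "\<dots> = (\<Sum>i\<in>T. \<Sum>j\<in>T - {i}. 3 * grad_const * decay ^ z)
      + grad_const * (\<Sum>i\<in>T. \<Sum>j\<in>T - {i}. ratio ^ nat_dist (y i) (y j))"
    by (simp add: sum.distrib sum_distrib_left algebra_simps)
  also have "\<dots> \<le> (\<Sum>i\<in>T. \<Sum>j\<in>T. 3 * grad_const * decay ^ z)
      + grad_const * (\<Sum>i\<in>T. \<Sum>j\<in>T - {i}. ratio ^ nat_dist (y i) (y j))"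
    using T decay by (intro add_right_mono sum_mono sum_mono2) (auto simp: grad_const_def)
  also have "\<dots> = 3 * grad_const * (real (card T))\<^sup>2 * decay ^ z
      + grad_const * (\<Sum>i\<in>T. \<Sum>j\<in>T - {i}. ratio ^ nat_dist (y i) (y j))"
    by (simp add: power2_eq_square)
  finally have "p * q * (\<Sum>i\<in>T. \<Sum>j\<in>T - {i}. e i * e j)
      \<le> p * q * (3 * grad_const * (real (card T))\<^sup>2 * decay ^ z
        + grad_const * (\<Sum>i\<in>T. \<Sum>j\<in>T - {i}. ratio ^ nat_dist (y i) (y j)))"
    using p_pos q_pos by (intro mult_left_mono) auto
  also have "\<dots> = pair_error y T + boundary_error T * decay ^ z"
    unfolding pair_error_def boundary_error_def by (simp add: algebra_simps)
  finally show ?thesis .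
qed

lemma one_site_product_defect:
  fixes y :: "'i \<Rightarrow> nat"
  assumes T: "finite T" and y: "\<And>i. i \<in> T \<Longrightarrow> 0 < y i \<and> y i < N" and z: "0 < z" "z < N"
  defines "V \<equiv> \<lambda>w. \<Prod>i\<in>T. one_site N (y i) w"
  shows "\<bar>V z - flip_sign y T z * (p * V (z + 1) + q * V (z - 1))\<bar>
    \<le> pair_error y T + boundary_error T * decay ^ z"
proof -
  define e where "e i = \<bar>one_site N (y i) (z + 1) - one_site N (y i) (z - 1)\<bar>" for i
  have "\<bar>V z - flip_sign y T z * (p * V (z + 1) + q * V (z - 1))\<bar>
      \<le> p * q * ((\<Sum>i\<in>T. e i)\<^sup>2 - (\<Sum>i\<in>T. (e i)\<^sup>2))"
    unfolding V_def flip_sign_def e_def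
  proof (rule product_defect[OF T _ _ _ z])
    fix i w assume "i \<in> T" "0 < w" "w < N"
    then show "one_site N (y i) w = (if y i = w then -1 else 1) *
        (p * one_site N (y i) (w + 1) + q * one_site N (y i) (w - 1))"
      using y by (intro one_site_equation) auto
  next
    fix i w assume "i \<in> T" "w \<le> N"
    then show "\<bar>one_site N (y i) w\<bar> \<le> 1" using y by (intro one_site_bound) auto
  qed simp
  then show ?thesis
    using cross_terms_bound[of T y N z, OF T y z] square_sum_minus_sum_squares[OF T, of e]
    unfolding e_def by simp
qed

lemma parity_corr_approx:
  fixes y :: "'i \<Rightarrow> nat"
  assumes T: "finite T" and y: "\<And>i. i \<in> T \<Longrightarrow> 0 < y i \<and> y i < N" and x: "x \<le> N"
  shows "\<bar>parity_corr p N y T x - (\<Prod>i\<in>T. one_site N (y i) x)\<bar>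
    \<le> pair_error y T * (real N - real x) / (p - q)
      + boundary_error T / (1 - (p * decay + q / decay)) * decay ^ x"
proof (rule twisted_equation_stability[where s = "flip_sign y T"])
  show "\<bar>flip_sign y T z\<bar> = 1" for z by (rule abs_flip_sign)
  show "parity_corr p N y T z = flip_sign y T z * (p * parity_corr p N y T (z + 1) + q * parity_corr p N y T (z - 1))"
    if "0 < z" "z < N" for z
    by (rule parity_corr_equation) (use y that in auto)
  show "\<bar>(\<Prod>i\<in>T. one_site N (y i) z) - flip_sign y T z *
      (p * (\<Prod>i\<in>T. one_site N (y i) (z + 1)) + q * (\<Prod>i\<in>T. one_site N (y i) (z - 1)))\<bar>
    \<le> pair_error y T + boundary_error T * decay ^ z" if "0 < z" "z < N" for z
    using one_site_product_defect[OF T y that] by simp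
  show "parity_corr p N y T 0 = (\<Prod>i\<in>T. one_site N (y i) 0)"
    "parity_corr p N y T N = (\<Prod>i\<in>T. one_site N (y i) N)"
    using parity_corr_boundary[of T y N] y one_site_boundary by simp_all
qed (use decay errors_nonneg x in auto)

end


lemma linear_growth_at_top:
  fixes g :: "nat \<Rightarrow> nat"
  assumes c: "0 < c" and g: "\<And>N. c * real N - d \<le> real (g N)"
  shows "filterlim g at_top sequentially"
  unfolding filterlim_at_top eventually_sequentially
proof (intro allI exI impI)
  fix Z N :: nat
  assume "nat \<lceil>(real Z + d) / c\<rceil> \<le> N"
  then have "real Z + d \<le> c * real N" using c by (simp add: field_simps)
  then show "Z \<le> g N" using g[of N] by linarith
qed

lemma linear_times_geometric_vanishes:
  fixes g :: "nat \<Rightarrow> nat" and r :: real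
  assumes r: "0 < r" "r < 1" and c: "0 < c" and g: "\<And>N. c * real N - d \<le> real (g N)"
  shows "(\<lambda>N. real N * r ^ g N) \<longlonglongrightarrow> 0"
proof -
  define \<theta> where "\<theta> = r powr c"
  have \<theta>: "0 < \<theta>" "\<theta> < 1" unfolding \<theta>_def using r c powr_less_mono2[of c r 1] by auto
  have bound: "norm (real N * r ^ g N) \<le> r powr (- d) * (real N * \<theta> ^ N)" for N
  proof -
    have "r ^ g N = r powr real (g N)" using r by (simp add: powr_realpow)
    also have "\<dots> \<le> r powr (c * real N - d)" using g[of N] r by (intro powr_mono') auto
    also have "\<dots> = r powr (- d) * \<theta> ^ N"
      unfolding \<theta>_def using r
      by (simp add: powr_add[symmetric] powr_powr powr_realpow[symmetric] algebra_simps)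
    finally show ?thesis using r by (simp add: mult_left_mono algebra_simps)
  qed
  have "(\<lambda>N. r powr (- d) * (real N * \<theta> ^ N)) \<longlonglongrightarrow> r powr (- d) * 0"
    by (intro tendsto_mult tendsto_const powser_times_n_limit_0) (use \<theta> in simp)
  then show ?thesis
    using Lim_null_comparison[OF always_eventually[OF allI[OF bound]]] by simp
qed

lemma nat_floor_bounds:
  "0 \<le> \<beta> \<Longrightarrow> \<beta> * real N - 1 \<le> real (nat \<lfloor>\<beta> * real N\<rfloor>) \<and> real (nat \<lfloor>\<beta> * real N\<rfloor>) \<le> \<beta> * real N"
  by (auto simp: of_nat_nat)

lemma real_diff_le_of_nat_diff: "real m - real n \<le> real (m - n)"
  by (cases "n \<le> m") (auto simp: of_nat_diff)

context drifted_walk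
begin

definition parity_limit :: real where "parity_limit = 1 - 2 / (2 - (p - q))"

lemma one_site_left_formula:
  assumes "x \<le> t" "0 < t" "t < N"
  shows "one_site N t x = 1 - 2 / (1 + (p * ((ratio - ratio ^ (N - t)) / (1 - ratio ^ (N - t)))
      + q * ((1 - ratio ^ (t - 1)) / (1 - ratio ^ t)))) * ((1 - ratio ^ x) / (1 - ratio ^ t))"
proof -
  have "ratio ^ N = ratio ^ t * ratio ^ (N - t)" "ratio ^ (t + 1) = ratio ^ t * ratio"
    using assms by (simp_all add: power_add[symmetric])
  then have "down_profile N t (t + 1) = (ratio ^ t * (ratio - ratio ^ (N - t))) / (ratio ^ t * (1 - ratio ^ (N - t)))"
    unfolding down_profile_def by (simp add: algebra_simps)
  also have "\<dots> = (ratio - ratio ^ (N - t)) / (1 - ratio ^ (N - t))"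
    using ratio_pos by (intro mult_divide_mult_cancel_left) simp
  finally show ?thesis
    using assms unfolding one_site_def tent_coeff_def tent_def up_profile_def by simp
qed

lemma ratio_power_vanishes:
  assumes "filterlim g at_top F" shows "((\<lambda>N. ratio ^ g N) \<longlongrightarrow> 0) F"
proof -
  have "norm ratio < 1" using ratio_pos ratio_less_1 by simp
  with assms show ?thesis by (rule tendsto_power_zero)
qed

lemma one_site_limit:
  fixes x t :: "nat \<Rightarrow> nat"
  assumes x: "filterlim x at_top sequentially" and gap: "filterlim (\<lambda>N. N - t N) at_top sequentially"
    and left: "eventually (\<lambda>N. x N \<le> t N) sequentially"
  shows "(\<lambda>N. one_site N (t N) (x N)) \<longlonglongrightarrow> parity_limit"
proof -
  have t: "filterlim t at_top sequentially" by (rule filterlim_at_top_mono[OF x left])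
  have t1: "filterlim (\<lambda>N. t N - 1) at_top sequentially"
    by (rule filterlim_compose[OF filterlim_minus_const_nat_at_top t])
  let ?F = "\<lambda>N. 1 - 2 / (1 + (p * ((ratio - ratio ^ (N - t N)) / (1 - ratio ^ (N - t N)))
      + q * ((1 - ratio ^ (t N - 1)) / (1 - ratio ^ t N)))) * ((1 - ratio ^ x N) / (1 - ratio ^ t N))"
  have "?F \<longlonglongrightarrow> 1 - 2 / (1 + (p * ((ratio - 0) / (1 - 0)) + q * ((1 - 0) / (1 - 0)))) * ((1 - 0) / (1 - 0))"
    using mult_pos_pos[OF p_pos ratio_pos] q_pos
    by (intro tendsto_intros ratio_power_vanishes x t t1 gap) simp_all
  moreover have "1 + (p * ratio + q) = 2 - (p - q)"
    using p_pos q_def unfolding ratio_def by simp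
  ultimately have limit: "?F \<longlonglongrightarrow> parity_limit"
    unfolding parity_limit_def by (simp add: add.assoc)
  have "eventually (\<lambda>N. 1 \<le> x N) sequentially" "eventually (\<lambda>N. 1 \<le> N - t N) sequentially"
    using x gap unfolding filterlim_at_top by auto
  with left have "eventually (\<lambda>N. 1 \<le> x N \<and> 1 \<le> N - t N \<and> x N \<le> t N) sequentially"
    by eventually_elim auto
  then have "eventually (\<lambda>N. ?F N = one_site N (t N) (x N)) sequentially"
    by eventually_elim (rule one_site_left_formula[symmetric], auto)
  then show ?thesis using limit by (rule Lim_transform_eventually[rotated])
qed

end


locale linear_sites = drifted_walk +
  fixes \<alpha> :: real and a :: "'i \<Rightarrow> real" and I :: "'i set"
  assumes alpha: "0 < \<alpha>" "\<alpha> < 1"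
    and sites: "\<And>i. i \<in> I \<Longrightarrow> \<alpha> < a i \<and> a i < 1"
    and distinct: "inj_on a I"
begin

definition start :: "nat \<Rightarrow> nat" where "start N = nat \<lfloor>\<alpha> * real N\<rfloor>"

definition site :: "nat \<Rightarrow> 'i \<Rightarrow> nat" where "site N i = nat \<lfloor>a i * real N\<rfloor>"

lemma start_bounds: "\<alpha> * real N - 1 \<le> real (start N)" "real (start N) \<le> \<alpha> * real N"
  unfolding start_def using nat_floor_bounds[of \<alpha> N] alpha by auto

lemma site_bounds:
  assumes "i \<in> I" shows "a i * real N - 1 \<le> real (site N i)" "real (site N i) \<le> a i * real N"
  unfolding site_def using nat_floor_bounds[of "a i" N] sites[OF assms] alpha by auto

lemma start_le: "start N \<le> N"
proof -
  have "real (start N) \<le> real N"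
    using start_bounds(2)[of N] mult_right_mono[of \<alpha> 1 "real N"] alpha by simp
  then show ?thesis by simp
qed

lemma start_at_top: "filterlim start at_top sequentially"
  by (rule linear_growth_at_top[where c = \<alpha> and d = 1]) (use alpha start_bounds in auto)

lemma site_gap_at_top:
  assumes "i \<in> I" shows "filterlim (\<lambda>N. N - site N i) at_top sequentially"
proof (rule linear_growth_at_top[where c = "1 - a i" and d = 0])
  show "0 < 1 - a i" using sites[OF assms] by simp
  show "(1 - a i) * real N - 0 \<le> real (N - site N i)" for N
    using real_diff_le_of_nat_diff[of N "site N i"] site_bounds[OF assms, of N] by (simp add: algebra_simps)
qed

lemma site_ahead_at_top:
  assumes "i \<in> I" shows "filterlim (\<lambda>N. site N i - start N) at_top sequentially"
proof (rule linear_growth_at_top[where c = "a i - \<alpha>" and d = 1])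
  show "0 < a i - \<alpha>" using sites[OF assms] by simp
  show "(a i - \<alpha>) * real N - 1 \<le> real (site N i - start N)" for N
    using real_diff_le_of_nat_diff[of "site N i" "start N"] site_bounds[OF assms, of N] start_bounds[of N]
    by (simp add: algebra_simps)
qed

lemma eventually_sites_interior:
  assumes "finite T" "T \<subseteq> I"
  shows "eventually (\<lambda>N. start N \<le> N \<and> (\<forall>i\<in>T. 0 < site N i \<and> site N i < N)) sequentially"
proof -
  have "eventually (\<lambda>N. \<forall>i\<in>T. 1 \<le> site N i - start N \<and> 1 \<le> N - site N i) sequentially"
    using assms site_ahead_at_top site_gap_at_top unfolding filterlim_at_top
    by (intro eventually_ball_finite ballI eventually_conj) auto
  then show ?thesis
    by (rule eventually_mono) (auto simp: start_le)
qed

lemma one_site_at_sites: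
  assumes "i \<in> I" shows "(\<lambda>N. one_site N (site N i) (start N)) \<longlonglongrightarrow> parity_limit"
proof (rule one_site_limit[OF start_at_top site_gap_at_top[OF assms]])
  have "eventually (\<lambda>N. 1 \<le> site N i - start N) sequentially"
    using site_ahead_at_top[OF assms] unfolding filterlim_at_top by auto
  then show "eventually (\<lambda>N. start N \<le> site N i) sequentially"
    by (rule eventually_mono) simp
qed

text \<open>Two distinct sites are at distance of order \<open>N\<close>, so their interaction
  \<open>r^{|y_i - y_j|}\<close> beats the factor \<open>N\<close> from the stability estimate.\<close>
lemma interaction_vanishes:
  assumes "i \<in> I" "j \<in> I" "i \<noteq> j"
  shows "(\<lambda>N. real N * ratio ^ nat_dist (site N i) (site N j)) \<longlonglongrightarrow> 0"
proof (rule linear_times_geometric_vanishes[where c = "\<bar>a i - a j\<bar>" and d = 1])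
  show "0 < ratio" "ratio < 1" using ratio_pos ratio_less_1 .
  show "0 < \<bar>a i - a j\<bar>" using distinct assms by (auto dest: inj_onD)
  show "\<bar>a i - a j\<bar> * real N - 1 \<le> real (nat_dist (site N i) (site N j))" for N
  proof -
    have "\<bar>a i - a j\<bar> * real N = \<bar>a i * real N - a j * real N\<bar>"
      by (simp add: abs_mult_pos left_diff_distrib)
    then show ?thesis
      unfolding real_nat_dist using site_bounds[OF assms(1), of N] site_bounds[OF assms(2), of N]
      by (simp add: abs_if)
  qed
qed

lemma approximation_error_vanishes:
  assumes "finite T" "T \<subseteq> I"
  shows "(\<lambda>N. pair_error (site N) T * (real N - real (start N)) / (p - q)
      + boundary_error T / (1 - (p * decay + q / decay)) * decay ^ start N) \<longlonglongrightarrow> 0"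
proof -
  have "(\<lambda>N. pair_error (site N) T * real N / (p - q)
      + boundary_error T / (1 - (p * decay + q / decay)) * decay ^ start N) \<longlonglongrightarrow> 0"
  proof -
    have "(\<lambda>N. p * q * grad_const * (\<Sum>i\<in>T. \<Sum>j\<in>T - {i}. real N * ratio ^ nat_dist (site N i) (site N j)) / (p - q)
        + boundary_error T / (1 - (p * decay + q / decay)) * decay ^ start N)
      \<longlonglongrightarrow> p * q * grad_const * (\<Sum>i\<in>T. \<Sum>j\<in>T - {i}. 0) / (p - q) + boundary_error T / (1 - (p * decay + q / decay)) * 0"
      using assms decay q_less_p
      by (intro tendsto_intros interaction_vanishes tendsto_power_zero[OF start_at_top]) auto
    then show ?thesis
      unfolding pair_error_def by (simp add: sum_distrib_left sum_distrib_right algebra_simps)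
  qed
  moreover have "eventually (\<lambda>N. norm (pair_error (site N) T * (real N - real (start N)) / (p - q)
      + boundary_error T / (1 - (p * decay + q / decay)) * decay ^ start N)
    \<le> pair_error (site N) T * real N / (p - q) + boundary_error T / (1 - (p * decay + q / decay)) * decay ^ start N) sequentially"
  proof (intro always_eventually allI)
    fix N
    have gap: "0 < 1 - (p * decay + q / decay)" "0 < p - q" using decay q_less_p by auto
    have "0 \<le> pair_error (site N) T * (real N - real (start N)) / (p - q)"
      using errors_nonneg start_le[of N] gap by (intro divide_nonneg_pos mult_nonneg_nonneg) auto
    moreover have "pair_error (site N) T * (real N - real (start N)) / (p - q) \<le> pair_error (site N) T * real N / (p - q)"
      using errors_nonneg gap by (intro divide_right_mono mult_left_mono) auto
    moreover have "0 \<le> boundary_error T / (1 - (p * decay + q / decay)) * decay ^ start N"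
      using errors_nonneg gap decay by (intro mult_nonneg_nonneg divide_nonneg_pos) auto
    ultimately show "norm (pair_error (site N) T * (real N - real (start N)) / (p - q)
      + boundary_error T / (1 - (p * decay + q / decay)) * decay ^ start N)
      \<le> pair_error (site N) T * real N / (p - q) + boundary_error T / (1 - (p * decay + q / decay)) * decay ^ start N"
      by simp
  qed
  ultimately show ?thesis
    by (rule Lim_null_comparison[rotated])
qed

lemma parity_corr_limit:
  assumes "finite T" "T \<subseteq> I"
  shows "(\<lambda>N. parity_corr p N (site N) T (start N)) \<longlonglongrightarrow> parity_limit ^ card T"
proof -
  let ?V = "\<lambda>N. \<Prod>i\<in>T. one_site N (site N i) (start N)"
  have "eventually (\<lambda>N. norm (parity_corr p N (site N) T (start N) - ?V N)
      \<le> pair_error (site N) T * (real N - real (start N)) / (p - q)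
        + boundary_error T / (1 - (p * decay + q / decay)) * decay ^ start N) sequentially"
    using eventually_sites_interior[OF assms]
    by eventually_elim (use parity_corr_approx[OF assms(1)] in auto)
  then have "(\<lambda>N. parity_corr p N (site N) T (start N) - ?V N) \<longlonglongrightarrow> 0"
    by (rule Lim_null_comparison) (rule approximation_error_vanishes[OF assms])
  moreover have "?V \<longlonglongrightarrow> (\<Prod>i\<in>T. parity_limit)"
    using assms by (intro tendsto_prod one_site_at_sites) auto
  ultimately have "(\<lambda>N. ?V N + (parity_corr p N (site N) T (start N) - ?V N)) \<longlonglongrightarrow> (\<Prod>i\<in>T. parity_limit) + 0"
    by (intro tendsto_add)
  then show ?thesis by simp
qed

end


section \<open>From parity correlations to the joint parity law\<close>

text \<open>Writing the indicator of \<open>odd n \<longleftrightarrow> i \<in> B\<close> as \<open>(1 + \<epsilon>\<^sub>i (-1)^n) / 2\<close> and expanding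
  the product over \<open>i \<in> I\<close> expresses the joint parity law as a linear combination of
  parity correlations over the subsets \<open>X \<subseteq> I\<close>.\<close>
definition sign_choice :: "'i set \<Rightarrow> 'i \<Rightarrow> real" where
  "sign_choice B i = (if i \<in> B then -1 else 1)"

definition parity_coeff :: "'i set \<Rightarrow> 'i set \<Rightarrow> 'i set \<Rightarrow> real" where
  "parity_coeff I B X = (\<Prod>i\<in>X. sign_choice B i / 2) * (\<Prod>i\<in>I - X. 1 / 2)"

lemma parity_indicator_expansion:
  fixes n :: "'i \<Rightarrow> nat"
  assumes "finite I"
  shows "of_bool (\<forall>i\<in>I. odd (n i) \<longleftrightarrow> i \<in> B)
    = (\<Sum>X\<in>Pow I. parity_coeff I B X * (\<Prod>i\<in>X. (-1) ^ n i))"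
proof -
  have factor: "sign_choice B i / 2 * (-1) ^ n i + 1 / 2 = of_bool (odd (n i) \<longleftrightarrow> i \<in> B)" for i
    unfolding sign_choice_def by (cases "even (n i)") auto
  have "of_bool (\<forall>i\<in>I. odd (n i) \<longleftrightarrow> i \<in> B) = (\<Prod>i\<in>I. of_bool (odd (n i) \<longleftrightarrow> i \<in> B) :: real)"
    using assms by (induction I rule: finite_induct) auto
  also have "\<dots> = (\<Prod>i\<in>I. sign_choice B i / 2 * (-1) ^ n i + 1 / 2)"
    unfolding factor ..
  also have "\<dots> = (\<Sum>X\<in>Pow I. (\<Prod>i\<in>X. sign_choice B i / 2 * (-1) ^ n i) * (\<Prod>i\<in>I - X. 1 / 2))"
    by (rule prod_add[OF assms])
  also have "\<dots> = (\<Sum>X\<in>Pow I. parity_coeff I B X * (\<Prod>i\<in>X. (-1) ^ n i))"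
    unfolding parity_coeff_def prod.distrib by (simp only: ac_simps)
  finally show ?thesis .
qed

lemma parity_law_expansion:
  fixes y :: "'i \<Rightarrow> nat"
  assumes "finite I"
  shows "Pwalk p (\<lambda>\<omega>. \<forall>i\<in>I. odd (visits N x (y i) \<omega>) \<longleftrightarrow> i \<in> B)
    = (\<Sum>X\<in>Pow I. parity_coeff I B X * parity_corr p N y X x)"
proof -
  interpret S: prob_space "step_space p" by (rule prob_space_step_space)
  let ?E = "{\<omega> \<in> space (step_space p). \<forall>i\<in>I. odd (visits N x (y i) \<omega>) \<longleftrightarrow> i \<in> B}"
  have "Measurable.pred (step_space p) (\<lambda>\<omega>. odd (visits N x (y i) \<omega>) \<longleftrightarrow> i \<in> B)" for i
    by (rule measurable_compose[OF measurable_visits]) simp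
  then have [measurable]: "?E \<in> sets (step_space p)"
    using assms by (intro sets.sets_Collect_finite_All) auto
  have "Pwalk p (\<lambda>\<omega>. \<forall>i\<in>I. odd (visits N x (y i) \<omega>) \<longleftrightarrow> i \<in> B) = (\<integral>\<omega>. indicator ?E \<omega> \<partial>step_space p)"
    unfolding Pwalk_def by simp
  also have "\<dots> = (\<integral>\<omega>. (\<Sum>X\<in>Pow I. parity_coeff I B X * parity_sign N y X x \<omega>) \<partial>step_space p)"
    unfolding parity_sign_def
    by (intro Bochner_Integration.integral_cong refl)
       (simp add: parity_indicator_expansion[OF assms, symmetric] indicator_def)
  also have "\<dots> = (\<Sum>X\<in>Pow I. parity_coeff I B X * parity_corr p N y X x)"
    unfolding parity_corr_def
    by (subst Bochner_Integration.integral_sum)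
       (auto intro!: integrable_mult_right S.integrable_const_bound[where B = 1] simp: abs_parity_sign)
  finally show ?thesis .
qed

lemma parity_coeff_sum:
  assumes "finite I" "B \<subseteq> I"
  shows "(\<Sum>X\<in>Pow I. parity_coeff I B X * c ^ card X)
    = ((1 - c) / 2) ^ card B * ((1 + c) / 2) ^ (card I - card B)"
proof -
  have "(\<Sum>X\<in>Pow I. parity_coeff I B X * c ^ card X)
      = (\<Sum>X\<in>Pow I. (\<Prod>i\<in>X. c * sign_choice B i / 2) * (\<Prod>i\<in>I - X. 1 / 2))"
  proof (intro sum.cong refl)
    fix X
    have "(\<Prod>i\<in>X. c * sign_choice B i / 2) = (\<Prod>i\<in>X. c * (sign_choice B i / 2))"
      by simp
    also have "\<dots> = c ^ card X * (\<Prod>i\<in>X. sign_choice B i / 2)"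
      by (simp only: prod.distrib prod_constant)
    finally show "parity_coeff I B X * c ^ card X = (\<Prod>i\<in>X. c * sign_choice B i / 2) * (\<Prod>i\<in>I - X. 1 / 2)"
      unfolding parity_coeff_def by simp
  qed
  also have "\<dots> = (\<Prod>i\<in>I. c * sign_choice B i / 2 + 1 / 2)"
    by (rule prod_add[OF assms(1), symmetric])
  also have "\<dots> = (\<Prod>i\<in>I. if i \<in> B then (1 - c) / 2 else (1 + c) / 2)"
    by (intro prod.cong refl) (auto simp: sign_choice_def field_simps)
  also have "\<dots> = ((1 - c) / 2) ^ card B * ((1 + c) / 2) ^ (card I - card B)"
    using assms by (simp add: prod.If_cases Int_absorb1 Diff_eq[symmetric] card_Diff_subset finite_subset)
  finally show ?thesis .
qed

context linear_sites
begin

theorem parity_law_limit: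
  assumes "finite I" "B \<subseteq> I"
  shows "(\<lambda>N. Pwalk p (\<lambda>\<omega>. \<forall>i\<in>I. odd (visits N (start N) (site N i) \<omega>) \<longleftrightarrow> i \<in> B))
    \<longlonglongrightarrow> (1 / (2 - (p - q))) ^ card B * (1 - 1 / (2 - (p - q))) ^ (card I - card B)"
proof -
  have "(\<lambda>N. \<Sum>X\<in>Pow I. parity_coeff I B X * parity_corr p N (site N) X (start N))
      \<longlonglongrightarrow> (\<Sum>X\<in>Pow I. parity_coeff I B X * parity_limit ^ card X)"
    using assms(1) by (intro tendsto_sum tendsto_mult tendsto_const parity_corr_limit) (auto intro: finite_subset)
  moreover have "(1 - parity_limit) / 2 = 1 / (2 - (p - q))" "(1 + parity_limit) / 2 = 1 - 1 / (2 - (p - q))"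
    unfolding parity_limit_def using p_less_1 q_pos by (simp_all add: field_simps)
  ultimately show ?thesis
    unfolding parity_law_expansion[OF assms(1)] parity_coeff_sum[OF assms] by simp
qed

end


theorem proposition4p2:
  fixes p q \<alpha> :: real and k :: nat and a :: "nat \<Rightarrow> real"
  assumes q_def: "q = 1 - p"
    and pq: "0 < q" "q < p"
    and k: "k \<ge> 1"
    and alpha: "0 < \<alpha>" "\<alpha> < a 1"
    and mono: "\<And>i. 1 \<le> i \<Longrightarrow> i < k \<Longrightarrow> a i < a (Suc i)"
    and last: "a k < 1"
  shows "((\<lambda>N. Pwalk p (\<lambda>\<omega>. \<forall>i\<in>{1..k}.
              odd (visits N (nat \<lfloor>\<alpha> * real N\<rfloor>) (nat \<lfloor>a i * real N\<rfloor>) \<omega>)))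
           \<longlonglongrightarrow> 1 / (2 - (p - q)) ^ k) \<and>
         (\<forall>S. S \<subseteq> {1..k} \<longrightarrow>
          (\<lambda>N. Pwalk p (\<lambda>\<omega>. \<forall>i\<in>{1..k}.
              odd (visits N (nat \<lfloor>\<alpha> * real N\<rfloor>) (nat \<lfloor>a i * real N\<rfloor>) \<omega>) \<longleftrightarrow> i \<in> S))
           \<longlonglongrightarrow> (1 / (2 - (p - q))) ^ card S * (1 - 1 / (2 - (p - q))) ^ (k - card S))"
proof -
  have increasing: "strict_mono_on {1..k} a"
    using lift_Suc_mono_less_ivl[of "{1..<k}" a] mono by (intro strict_mono_onI) auto
  have "a 1 \<le> a i \<and> a i \<le> a k" if "i \<in> {1..k}" for i
    using that k strict_mono_on_leD[OF increasing] by auto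
  then have sites: "\<alpha> < a i \<and> a i < 1" if "i \<in> {1..k}" for i
    using that alpha last by force
  have "\<alpha> < 1" using sites[of 1] k by auto
  interpret linear_sites p q \<alpha> a "{1..k}"
    using q_def pq alpha \<open>\<alpha> < 1\<close> sites strict_mono_on_imp_inj_on[OF increasing]
    by unfold_locales auto
  have law: "(\<lambda>N. Pwalk p (\<lambda>\<omega>. \<forall>i\<in>{1..k}.
              odd (visits N (nat \<lfloor>\<alpha> * real N\<rfloor>) (nat \<lfloor>a i * real N\<rfloor>) \<omega>) \<longleftrightarrow> i \<in> S))
           \<longlonglongrightarrow> (1 / (2 - (p - q))) ^ card S * (1 - 1 / (2 - (p - q))) ^ (k - card S)"
    if "S \<subseteq> {1..k}" for S
    using parity_law_limit[OF finite_atLeastAtMost that] by (simp add: start_def site_def)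
  from law[of "{1..k}"] have "(\<lambda>N. Pwalk p (\<lambda>\<omega>. \<forall>i\<in>{1..k}.
              odd (visits N (nat \<lfloor>\<alpha> * real N\<rfloor>) (nat \<lfloor>a i * real N\<rfloor>) \<omega>)))
           \<longlonglongrightarrow> 1 / (2 - (p - q)) ^ k"
    by (simp add: power_one_over)
  with law show ?thesis by blast
qed

end
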